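(* Let $q$ be a prime power, let $m,k$ be integers with $0<k<m$ and $l=\gcd(k,m)$. Let $c\in\mathbb{F}_{q^l}^*$ and $g(x)\in\mathbb{F}_{q^m}[x]$. Then $g(x^{q^k}+x+\delta)+cx$ is a permutation polynomial of $\mathbb{F}_{q^m}$ for every $\delta\in\mathbb{F}_{q^m}$ if and only if $h(x)=g(x)^{q^k}+g(x)+cx$ is a permutation polynomial of $\mathbb{F}_{q^m}$.
   Context: A polynomial $f\in\mathbb{F}_Q[x]$ is a permutation polynomial of $\mathbb{F}_Q$ if the map $c\mapsto f(c)$ is a bijection of $\mathbb{F}_Q$. $\mathbb{F}_{q^l}$ is viewed as a subfield of $\mathbb{F}_{q^m}$ (since $l\mid m$). *)

theory Defs
  imports "HOL-Computational_Algebra.Polynomial" "HOL-Number_Theory.Prime_Powers"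
begin

definition perm_poly :: "'a::field poly \<Rightarrow> bool" where
  "perm_poly f \<longleftrightarrow> bij (poly f)"

end

theory Submission
  imports Defs "HOL-Number_Theory.Residues"
begin

text \<open>Since \<open>q\<close> is a power of the characteristic, \<open>\<psi>(x) = x^(q^k) + x\<close> is additive, and
  it commutes with multiplication by \<open>c\<close> because \<open>c \<in> GF(q^l) \<subseteq> GF(q^k)\<close>. For
  \<open>f\<^sub>\<delta>(x) = g(\<psi>(x) + \<delta>) + cx\<close> and \<open>h(x) = \<psi>(g(x)) + cx\<close> this gives
  \<open>h(\<psi>(x) + \<delta>) = \<psi>(f\<^sub>\<delta>(x)) + c\<delta>\<close>. So if \<open>h\<close> is injective, equal values of \<open>f\<^sub>\<delta>\<close> have equal
  \<open>\<psi>\<close>-values and hence equal \<open>cx\<close>; conversely, a zero \<open>x\<close> of \<open>f\<^sub>z\<^sub>/\<^sub>c\<close> gives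
  \<open>h(\<psi>(x) + z/c) = z\<close>. On a finite field injectivity and surjectivity each amount
  to bijectivity.\<close>

(* Residues, imported for CHAR_dvd_CARD, brings HOL-Algebra's monom into scope. *)
hide_const (open) UnivPoly.monom

lemma bij_shifted_composition_iff:
  fixes \<psi> G :: "'a::{field,finite} \<Rightarrow> 'a"
  assumes additive: "\<And>x y. \<psi> (x + y) = \<psi> x + \<psi> y"
    and commutes: "\<And>x. \<psi> (c * x) = c * \<psi> x"
    and "c \<noteq> 0"
  shows "(\<forall>\<delta>. bij (\<lambda>x. G (\<psi> x + \<delta>) + c * x)) \<longleftrightarrow> bij (\<lambda>x. \<psi> (G x) + c * x)"
    (is "(\<forall>\<delta>. bij (?f \<delta>)) \<longleftrightarrow> bij ?h")
proof
  have "\<psi> 0 + \<psi> 0 = \<psi> 0 + 0"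
    by (simp flip: additive)
  hence "\<psi> 0 = 0"
    by (rule add_left_imp_eq)
  have key: "?h (\<psi> x + \<delta>) = \<psi> (?f \<delta> x) + c * \<delta>" for \<delta> x
    by (simp add: additive commutes algebra_simps)
  show "bij ?h" if "\<forall>\<delta>. bij (?f \<delta>)"
  proof -
    have "z \<in> range ?h" for z
    proof -
      have "surj (?f (z / c))"
        using that by (simp add: bij_is_surj)
      then obtain x where "0 = ?f (z / c) x"
        by (rule surjE)
      hence "?h (\<psi> x + z / c) = z"
        using key[where \<delta> = "z / c"] \<open>\<psi> 0 = 0\<close> \<open>c \<noteq> 0\<close> by simp
      thus ?thesis
        by (rule range_eqI[OF sym])
    qed
    hence "surj ?h"
      by blast
    thus "bij ?h"
      using finite_UNIV_surj_inj[OF finite_UNIV] by (blast intro: bijI)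
  qed
  show "\<forall>\<delta>. bij (?f \<delta>)" if "bij ?h"
  proof
    fix \<delta>
    have "inj (?f \<delta>)"
    proof (rule injI)
      fix x y
      assume eq: "?f \<delta> x = ?f \<delta> y"
      have "?h (\<psi> x + \<delta>) = ?h (\<psi> y + \<delta>)"
        unfolding key eq ..
      hence "\<psi> x + \<delta> = \<psi> y + \<delta>"
        by (rule injD[OF bij_is_inj[OF that]])
      thus "x = y"
        using eq \<open>c \<noteq> 0\<close> by simp
    qed
    thus "bij (?f \<delta>)"
      using finite_UNIV_inj_surj[OF finite_UNIV] by (blast intro: bijI)
  qed
qed

lemma power_of_CHAR_if_card_eq_power:
  fixes q m :: nat
  assumes "primepow q" and "card (UNIV :: 'a::{field,finite} set) = q ^ m"
  obtains e where "q = CHAR('a) ^ e"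
proof -
  have "prime CHAR('a)"
    by (simp add: finite_imp_CHAR_pos prime_CHAR_semidom)
  obtain r e where "prime r" and q: "q = r ^ e"
    using \<open>primepow q\<close> unfolding primepow_def by blast
  have "CHAR('a) dvd r ^ (e * m)"
    using CHAR_dvd_CARD[where 'a = 'a] assms(2) by (simp add: q power_mult)
  hence "CHAR('a) dvd r"
    using \<open>prime CHAR('a)\<close> by (rule prime_dvd_power[rotated])
  hence "CHAR('a) = r"
    using \<open>prime CHAR('a)\<close> \<open>prime r\<close> primes_dvd_imp_eq by blast
  thus ?thesis
    by (intro that) (simp add: q)
qed

lemma freshmans_dream_card_power:
  fixes q m :: nat and x y :: "'a::{field,finite}"
  assumes "primepow q" and "card (UNIV :: 'a set) = q ^ m"
  shows "(x + y) ^ (q ^ k) = x ^ (q ^ k) + y ^ (q ^ k)"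
proof -
  obtain e where "q = CHAR('a) ^ e"
    by (rule power_of_CHAR_if_card_eq_power[OF assms])
  hence "q ^ k = CHAR('a) ^ (e * k)"
    by (simp add: power_mult)
  thus ?thesis
    by (simp add: finite_imp_CHAR_pos freshmans_dream' prime_CHAR_semidom)
qed

lemma power_power_eq_self_if_dvd:
  fixes c :: "'a::monoid_mult"
  assumes "c ^ (n ^ l) = c" and "l dvd k"
  shows "c ^ (n ^ k) = c"
proof -
  obtain t where "k = l * t"
    using \<open>l dvd k\<close> by blast
  have "c ^ (n ^ (l * t)) = c" for t
  proof (induction t)
    case (Suc t)
    have "c ^ (n ^ (l * Suc t)) = (c ^ (n ^ (l * t))) ^ (n ^ l)"
      by (simp add: power_add power_mult mult.commute flip: power_mult)
    thus ?case
      using Suc assms(1) by simp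
  qed simp
  thus ?thesis
    using \<open>k = l * t\<close> by simp
qed

theorem lemma2:
  fixes q m k l :: nat and c :: "'a::{field,finite}" and g :: "'a poly"
  assumes "primepow q"
    and "card (UNIV :: 'a set) = q ^ m"
    and "0 < k" and "k < m"
    and "l = gcd k m"
    and "c \<noteq> 0" and "c ^ (q ^ l) = c"
  shows "(\<forall>\<delta>::'a. perm_poly (pcompose g (monom 1 (q ^ k) + [:\<delta>, 1:]) + [:0, c:]))
         \<longleftrightarrow> perm_poly (g ^ (q ^ k) + g + [:0, c:])"
proof -
  define \<psi> :: "'a \<Rightarrow> 'a" where "\<psi> x = x ^ q ^ k + x" for x
  have additive: "\<psi> (x + y) = \<psi> x + \<psi> y" for x y
    using freshmans_dream_card_power[OF assms(1,2)] by (simp add: \<psi>_def)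
  have "c ^ q ^ k = c"
    by (rule power_power_eq_self_if_dvd[OF assms(7)]) (simp add: assms(5))
  hence commutes: "\<psi> (c * x) = c * \<psi> x" for x
    by (simp add: \<psi>_def algebra_simps)
  have f_eq: "poly (pcompose g (monom 1 (q ^ k) + [:\<delta>, 1:]) + [:0, c:]) = (\<lambda>x. poly g (\<psi> x + \<delta>) + c * x)"
    for \<delta>
    by (simp add: fun_eq_iff \<psi>_def poly_pcompose poly_monom algebra_simps)
  have h_eq: "poly (g ^ (q ^ k) + g + [:0, c:]) = (\<lambda>x. \<psi> (poly g x) + c * x)"
    by (simp add: fun_eq_iff \<psi>_def)
  have "(\<forall>\<delta>. bij (\<lambda>x. poly g (\<psi> x + \<delta>) + c * x)) \<longleftrightarrow> bij (\<lambda>x. \<psi> (poly g x) + c * x)"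
    using bij_shifted_composition_iff[of \<psi> c "poly g"] additive commutes \<open>c \<noteq> 0\<close> by blast
  thus ?thesis
    unfolding perm_poly_def f_eq h_eq .
qed

end
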